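(* Let $\phi : X \to Y$ be an open code between shift spaces. If $\phi$ is constant-to-one, then $\phi$ is bi-closing.
   Context: Shift spaces are closed shift-invariant subsets of $\mathcal{A}^{\mathbb{Z}}$; a code is a continuous shift-commuting map. Open: images of open sets are open. Constant-to-one: all fibers finite of cardinality independent of $y \in Y$. Bi-closing: never identifies two distinct left asymptotic points nor two distinct right asymptotic points, where $x,\bar x$ are left (right) asymptotic if $d(\sigma^{-n}x,\sigma^{-n}\bar x)\to0$ ($d(\sigma^{n}x,\sigma^{n}\bar x)\to0$), $d(x,\bar x)=2^{-k}$ with $k$ maximal such that $x_{[-k,k]}=\bar x_{[-k,k]}$. *)

theory Defs
  imports "HOL-Analysis.Analysis"
begin

definition full_shift_top :: "(int \<Rightarrow> 'a) topology" where
  "full_shift_top = product_topology (\<lambda>_. discrete_topology UNIV) UNIV"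

definition shift :: "(int \<Rightarrow> 'a) \<Rightarrow> (int \<Rightarrow> 'a)" where
  "shift x = (\<lambda>i. x (i + 1))"

definition shift_pow :: "int \<Rightarrow> (int \<Rightarrow> 'a) \<Rightarrow> (int \<Rightarrow> 'a)" where
  "shift_pow n x = (\<lambda>i. x (i + n))"

definition shift_space :: "(int \<Rightarrow> 'a::finite) set \<Rightarrow> bool" where
  "shift_space X \<longleftrightarrow> closedin full_shift_top X \<and> shift ` X = X"

text \<open>The metric d(x,y) = 2^(-k), k maximal with x[-k,k] = y[-k,k]
  (k = -1 if x_0 \<noteq> y_0, d = 0 if x = y).\<close>
definition shift_dist :: "(int \<Rightarrow> 'a) \<Rightarrow> (int \<Rightarrow> 'a) \<Rightarrow> real" where
  "shift_dist x y = (if x = y then 0 else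
     2 powr (1 - real (LEAST m::nat. x (- int m) \<noteq> y (- int m) \<or> x (int m) \<noteq> y (int m))))"

definition left_asymptotic :: "(int \<Rightarrow> 'a) \<Rightarrow> (int \<Rightarrow> 'a) \<Rightarrow> bool" where
  "left_asymptotic x y \<longleftrightarrow>
     ((\<lambda>n::nat. shift_dist (shift_pow (- int n) x) (shift_pow (- int n) y)) \<longlonglongrightarrow> 0)"

definition right_asymptotic :: "(int \<Rightarrow> 'a) \<Rightarrow> (int \<Rightarrow> 'a) \<Rightarrow> bool" where
  "right_asymptotic x y \<longleftrightarrow>
     ((\<lambda>n::nat. shift_dist (shift_pow (int n) x) (shift_pow (int n) y)) \<longlonglongrightarrow> 0)"

definition is_code :: "(int \<Rightarrow> 'a::finite) set \<Rightarrow> (int \<Rightarrow> 'b::finite) set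
    \<Rightarrow> ((int \<Rightarrow> 'a) \<Rightarrow> (int \<Rightarrow> 'b)) \<Rightarrow> bool" where
  "is_code X Y \<phi> \<longleftrightarrow> shift_space X \<and> shift_space Y \<and>
     continuous_map (subtopology full_shift_top X) (subtopology full_shift_top Y) \<phi> \<and>
     (\<forall>x\<in>X. \<phi> (shift x) = shift (\<phi> x))"

definition open_code :: "(int \<Rightarrow> 'a::finite) set \<Rightarrow> (int \<Rightarrow> 'b::finite) set
    \<Rightarrow> ((int \<Rightarrow> 'a) \<Rightarrow> (int \<Rightarrow> 'b)) \<Rightarrow> bool" where
  "open_code X Y \<phi> \<longleftrightarrow>
     open_map (subtopology full_shift_top X) (subtopology full_shift_top Y) \<phi>"

definition constant_to_one :: "(int \<Rightarrow> 'a) set \<Rightarrow> (int \<Rightarrow> 'b) set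
    \<Rightarrow> ((int \<Rightarrow> 'a) \<Rightarrow> (int \<Rightarrow> 'b)) \<Rightarrow> bool" where
  "constant_to_one X Y \<phi> \<longleftrightarrow>
     (\<exists>N::nat. \<forall>y\<in>Y. finite {x\<in>X. \<phi> x = y} \<and> card {x\<in>X. \<phi> x = y} = N)"

definition bi_closing :: "(int \<Rightarrow> 'a) set \<Rightarrow> ((int \<Rightarrow> 'a) \<Rightarrow> (int \<Rightarrow> 'b)) \<Rightarrow> bool" where
  "bi_closing X \<phi> \<longleftrightarrow>
     (\<forall>x\<in>X. \<forall>x'\<in>X. x \<noteq> x' \<and> left_asymptotic x x' \<longrightarrow> \<phi> x \<noteq> \<phi> x') \<and>
     (\<forall>x\<in>X. \<forall>x'\<in>X. x \<noteq> x' \<and> right_asymptotic x x' \<longrightarrow> \<phi> x \<noteq> \<phi> x')"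

end

theory Submission
  imports Defs
begin

text \<open>Openness and constant fibre cardinality force the fibres of \<open>\<phi>\<close> to be uniformly
  separated: there is a \<open>K\<close> such that distinct points with the same image differ somewhere on
  \<open>[-K, K]\<close>. Near a point \<open>z\<close>, choose \<open>K\<close> separating the finite fibre over \<open>z\<close>; the images of
  the \<open>K\<close>-cylinders around these preimages are open, so every nearby fibre meets each of these
  cylinders, and since it has the same cardinality it meets each of them exactly once.
  Compactness of \<open>Y\<close> makes \<open>K\<close> uniform. Two distinct asymptotic points with the same image
  would, after a suitable shift, agree on \<open>[-K, K]\<close> while still having the same image.\<close>

definition cylinder :: "nat \<Rightarrow> (int \<Rightarrow> 'a) \<Rightarrow> (int \<Rightarrow> 'a) set" where
  "cylinder K w = {u. \<forall>i. \<bar>i\<bar> \<le> int K \<longrightarrow> u i = w i}"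

definition cylinder_separated :: "nat \<Rightarrow> (int \<Rightarrow> 'a) set \<Rightarrow> bool" where
  "cylinder_separated K S \<longleftrightarrow> (\<forall>u\<in>S. \<forall>v\<in>S. v \<in> cylinder K u \<longrightarrow> v = u)"

lemma topspace_full_shift_top [simp]: "topspace full_shift_top = UNIV"
  by (simp add: full_shift_top_def)

lemma compact_space_full_shift_top: "compact_space (full_shift_top :: (int \<Rightarrow> 'a::finite) topology)"
  unfolding full_shift_top_def
  by (simp add: compact_space_product_topology compact_space_discrete_topology)

lemma openin_cylinder: "openin full_shift_top (cylinder K w)"
proof -
  have coord: "openin full_shift_top {u. u i = w i}" for i
  proof -
    have "continuous_map full_shift_top (discrete_topology UNIV) (\<lambda>x. x i)"
      unfolding full_shift_top_def by (rule continuous_map_product_projection) simp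
    from openin_continuous_map_preimage[OF this, of "{w i}"] show ?thesis
      by simp
  qed
  have "cylinder K w = \<Inter> ((\<lambda>i. {u. u i = w i}) ` {- int K..int K})"
    by (auto simp: cylinder_def abs_le_iff)
  also have "openin full_shift_top \<dots>"
    by (rule openin_Inter) (auto intro: coord)
  finally show ?thesis .
qed

lemma self_in_cylinder [simp]: "w \<in> cylinder K w"
  by (simp add: cylinder_def)

lemma cylinder_antimono: "K \<le> L \<Longrightarrow> cylinder L w \<subseteq> cylinder K w"
  by (auto simp: cylinder_def)

lemma cylinder_separated_mono:
  "K \<le> L \<Longrightarrow> cylinder_separated K S \<Longrightarrow> cylinder_separated L S"
  unfolding cylinder_separated_def by (meson cylinder_antimono subsetD)

lemma eventually_not_in_cylinder:
  assumes "u \<noteq> v"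
  shows "eventually (\<lambda>K. v \<notin> cylinder K u) sequentially"
proof -
  obtain i where "u i \<noteq> v i"
    using assms by blast
  moreover have "\<bar>i\<bar> \<le> int K" if "nat \<bar>i\<bar> \<le> K" for K
    using that by linarith
  ultimately have "v \<notin> cylinder K u" if "nat \<bar>i\<bar> \<le> K" for K
    using that by (fastforce simp: cylinder_def)
  then show ?thesis
    unfolding eventually_sequentially by blast
qed

lemma finite_imp_eventually_cylinder_separated:
  assumes "finite S"
  shows "eventually (\<lambda>K. cylinder_separated K S) sequentially"
proof -
  have "eventually (\<lambda>K. \<forall>p\<in>{p \<in> S \<times> S. fst p \<noteq> snd p}. snd p \<notin> cylinder K (fst p)) sequentially"
    using assms by (intro eventually_ball_finite) (auto intro: eventually_not_in_cylinder)
  then show ?thesis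
    by eventually_elim (auto simp: cylinder_separated_def)
qed

lemma eventually_ball_compactin:
  assumes "compactin T S"
    and local: "\<And>z. z \<in> S \<Longrightarrow> \<exists>W. openin T W \<and> z \<in> W \<and> eventually (\<lambda>k. \<forall>y\<in>W. Q k y) F"
  shows "eventually (\<lambda>k. \<forall>y\<in>S. Q k y) F"
proof -
  have "\<forall>z\<in>S. \<exists>W. openin T W \<and> z \<in> W \<and> eventually (\<lambda>k. \<forall>y\<in>W. Q k y) F"
    using local by blast
  then obtain W where W: "\<forall>z\<in>S. openin T (W z) \<and> z \<in> W z \<and> eventually (\<lambda>k. \<forall>y\<in>W z. Q k y) F"
    by (rule bchoice[THEN exE])
  have cover: "\<exists>\<F>. finite \<F> \<and> \<F> \<subseteq> \<U> \<and> S \<subseteq> \<Union>\<F>"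
    if "\<And>B. B \<in> \<U> \<Longrightarrow> openin T B" "S \<subseteq> \<Union>\<U>" for \<U>
    using assms(1) that unfolding compactin_def by blast
  have "\<exists>\<F>. finite \<F> \<and> \<F> \<subseteq> W ` S \<and> S \<subseteq> \<Union>\<F>"
  proof (rule cover)
    show "openin T B" if "B \<in> W ` S" for B
      using W that by blast
    show "S \<subseteq> \<Union>(W ` S)"
      using W by blast
  qed
  then obtain \<F> where \<F>: "finite \<F>" "\<F> \<subseteq> W ` S" "S \<subseteq> \<Union>\<F>"
    by blast
  then obtain C where C: "C \<subseteq> S" "finite C" "S \<subseteq> (\<Union>z\<in>C. W z)"
    using finite_subset_image[OF \<F>(1,2)] by blast
  have "eventually (\<lambda>k. \<forall>z\<in>C. \<forall>y\<in>W z. Q k y) F"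
    using W C(1) by (intro eventually_ball_finite[OF C(2)]) blast
  then show ?thesis
    by eventually_elim (use C(3) in blast)
qed

text \<open>Pigeonhole: the \<open>K\<close>-cylinders around the points of \<open>S\<close> are pairwise disjoint, so
  \<open>G\<close> has exactly one point in each of them.\<close>
lemma cylinder_separated_if_meets_cylinders:
  assumes "finite G" "card G \<le> card S" and sep: "cylinder_separated K S"
    and meets: "\<And>w. w \<in> S \<Longrightarrow> G \<inter> cylinder K w \<noteq> {}"
  shows "cylinder_separated K G"
proof -
  have "\<forall>w\<in>S. \<exists>x. x \<in> G \<and> x \<in> cylinder K w"
    using meets by blast
  then obtain g where g: "\<And>w. w \<in> S \<Longrightarrow> g w \<in> G \<and> g w \<in> cylinder K w"
    by metis
  have same_cylinder: "w' = w" if "w \<in> S" "w' \<in> S" "g w' \<in> cylinder K (g w)" for w w'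
  proof -
    have "w' \<in> cylinder K w"
      using g[OF \<open>w \<in> S\<close>] g[OF \<open>w' \<in> S\<close>] that(3) by (fastforce simp: cylinder_def)
    then show ?thesis
      using sep that unfolding cylinder_separated_def by blast
  qed
  have "inj_on g S"
    using same_cylinder by (intro inj_onI) (metis self_in_cylinder)
  then have "g ` S = G"
    using g assms(1,2) by (intro card_seteq) (auto simp: card_image)
  show ?thesis
    unfolding cylinder_separated_def
  proof (intro ballI impI)
    fix u v
    assume "u \<in> G" "v \<in> G" "v \<in> cylinder K u"
    moreover obtain w w' where "w \<in> S" "w' \<in> S" "u = g w" "v = g w'"
      using \<open>g ` S = G\<close> \<open>u \<in> G\<close> \<open>v \<in> G\<close> by blast
    ultimately show "v = u"
      using same_cylinder by metis
  qed
qed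

lemma fibres_cylinder_separated_near:
  fixes \<phi> :: "(int \<Rightarrow> 'a) \<Rightarrow> (int \<Rightarrow> 'b)"
  assumes open_map: "open_map (subtopology full_shift_top X) (subtopology full_shift_top Y) \<phi>"
    and image: "\<phi> ` X \<subseteq> Y"
    and fibres: "\<And>y. y \<in> Y \<Longrightarrow> finite {x\<in>X. \<phi> x = y} \<and> card {x\<in>X. \<phi> x = y} = N"
    and "z \<in> Y"
  shows "\<exists>W. openin full_shift_top W \<and> z \<in> W \<and>
           eventually (\<lambda>K. \<forall>y\<in>W. cylinder_separated K {x\<in>X. \<phi> x = y}) sequentially"
proof -
  define F where "F = {x\<in>X. \<phi> x = z}"
  obtain K where K: "cylinder_separated K F"
    using finite_imp_eventually_cylinder_separated[of F] fibres \<open>z \<in> Y\<close>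
    unfolding F_def eventually_sequentially by blast
  define V where "V = (\<Inter>w\<in>F. \<phi> ` (X \<inter> cylinder K w)) \<inter> Y"
  have "openin (subtopology full_shift_top Y) (\<phi> ` (X \<inter> cylinder K w))" for w
    using open_map openin_subtopology_Int2[OF openin_cylinder]
    unfolding open_map_def by blast
  then have "openin (subtopology full_shift_top Y) V"
    using openin_INT[of F "subtopology full_shift_top Y"] fibres \<open>z \<in> Y\<close>
    unfolding V_def F_def by auto
  then obtain W where W: "openin full_shift_top W" "V = W \<inter> Y"
    unfolding openin_subtopology by blast
  have "z \<in> V"
    unfolding V_def F_def using \<open>z \<in> Y\<close> self_in_cylinder by blast
  have "cylinder_separated K {x\<in>X. \<phi> x = y}" if "y \<in> W" for y
  proof (cases "y \<in> Y")
    case True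
    then have "y \<in> V"
      using W that by blast
    show ?thesis
    proof (rule cylinder_separated_if_meets_cylinders[OF _ _ K])
      show "finite {x\<in>X. \<phi> x = y}" "card {x\<in>X. \<phi> x = y} \<le> card F"
        using fibres \<open>y \<in> Y\<close> \<open>z \<in> Y\<close> by (auto simp: F_def)
      show "{x\<in>X. \<phi> x = y} \<inter> cylinder K w \<noteq> {}" if "w \<in> F" for w
        using \<open>y \<in> V\<close> that unfolding V_def by blast
    qed
  next
    case False
    then show ?thesis
      using image by (auto simp: cylinder_separated_def)
  qed
  then have "eventually (\<lambda>L. \<forall>y\<in>W. cylinder_separated L {x\<in>X. \<phi> x = y}) sequentially"
    unfolding eventually_sequentially by (meson cylinder_separated_mono)
  then show ?thesis
    using W \<open>z \<in> V\<close> by blast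
qed

lemma uniformly_cylinder_separated_fibres:
  fixes \<phi> :: "(int \<Rightarrow> 'a::finite) \<Rightarrow> (int \<Rightarrow> 'b::finite)"
  assumes "is_code X Y \<phi>" and "open_code X Y \<phi>" and "constant_to_one X Y \<phi>"
  shows "\<exists>K. \<forall>y. cylinder_separated K {x\<in>X. \<phi> x = y}"
proof -
  obtain N where N: "\<And>y. y \<in> Y \<Longrightarrow> finite {x\<in>X. \<phi> x = y} \<and> card {x\<in>X. \<phi> x = y} = N"
    using assms(3) unfolding constant_to_one_def by blast
  have "continuous_map (subtopology full_shift_top X) (subtopology full_shift_top Y) \<phi>"
    and "closedin full_shift_top Y"
    using assms(1) unfolding is_code_def shift_space_def by auto
  then have image: "\<phi> ` X \<subseteq> Y" and compact: "compactin full_shift_top Y"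
    using continuous_map_image_subset_topspace closedin_compact_space[OF compact_space_full_shift_top]
    by fastforce+
  have "eventually (\<lambda>K. \<forall>y\<in>Y. cylinder_separated K {x\<in>X. \<phi> x = y}) sequentially"
  proof (rule eventually_ball_compactin[OF compact])
    fix z
    assume "z \<in> Y"
    with assms(2) image N
    show "\<exists>W. openin full_shift_top W \<and> z \<in> W \<and>
            eventually (\<lambda>K. \<forall>y\<in>W. cylinder_separated K {x\<in>X. \<phi> x = y}) sequentially"
      unfolding open_code_def by (rule fibres_cylinder_separated_near)
  qed
  then obtain K where "\<forall>y\<in>Y. cylinder_separated K {x\<in>X. \<phi> x = y}"
    unfolding eventually_sequentially by blast
  moreover have "cylinder_separated K {x\<in>X. \<phi> x = y}" if "y \<notin> Y" for y
    using image that by (auto simp: cylinder_separated_def)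
  ultimately show ?thesis
    by blast
qed

lemma shift_shift_pow: "shift (shift_pow n x) = shift_pow (n + 1) x"
  by (simp add: fun_eq_iff shift_def shift_pow_def ac_simps)

lemma inj_shift_pow: "inj (shift_pow n)"
proof (rule injI)
  fix x y :: "int \<Rightarrow> 'a"
  assume "shift_pow n x = shift_pow n y"
  then have "x (j - n + n) = y (j - n + n)" for j
    by (metis shift_pow_def)
  then show "x = y"
    by (simp add: fun_eq_iff)
qed

lemma inj_shift: "inj shift"
proof -
  have "shift = shift_pow 1"
    by (simp add: fun_eq_iff shift_def shift_pow_def)
  then show ?thesis
    using inj_shift_pow by metis
qed

lemma shift_pow_equivariant:
  assumes X: "shift ` X = X" and equivariant: "\<forall>x\<in>X. \<phi> (shift x) = shift (\<phi> x)"
    and "x \<in> X"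
  shows "shift_pow n x \<in> X \<and> \<phi> (shift_pow n x) = shift_pow n (\<phi> x)"
proof (induction n rule: int_induct[where k = 0])
  case base
  show ?case
    using \<open>x \<in> X\<close> by (simp add: shift_pow_def)
next
  case (step1 i)
  then show ?case
    using X equivariant by (auto simp: shift_shift_pow[symmetric])
next
  case (step2 i)
  then obtain u where u: "u \<in> X" "shift u = shift_pow i x"
    using X by (metis imageE)
  have "shift u = shift (shift_pow (i - 1) x)"
    using u(2) by (simp add: shift_shift_pow)
  then have "u = shift_pow (i - 1) x"
    by (rule injD[OF inj_shift])
  moreover have "shift (\<phi> u) = \<phi> (shift u)"
    using equivariant u(1) by simp
  then have "shift (\<phi> u) = shift (shift_pow (i - 1) (\<phi> x))"
    using u(2) step2 by (simp add: shift_shift_pow)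
  then have "\<phi> u = shift_pow (i - 1) (\<phi> x)"
    by (rule injD[OF inj_shift])
  ultimately show ?case
    using u(1) by simp
qed

lemma in_cylinder_if_shift_dist_less:
  assumes "shift_dist u v < 2 powr (- real K)"
  shows "v \<in> cylinder K u"
proof (cases "u = v")
  case False
  define m where "m = (LEAST m::nat. u (- int m) \<noteq> v (- int m) \<or> u (int m) \<noteq> v (int m))"
  have "2 powr (1 - real m) < 2 powr (- real K)"
    using assms False by (simp add: shift_dist_def m_def)
  then have "K < m"
    by simp
  have "u i = v i" if "\<bar>i\<bar> \<le> int K" for i
  proof -
    have "nat \<bar>i\<bar> < m"
      using that \<open>K < m\<close> by linarith
    then have "u (- int (nat \<bar>i\<bar>)) = v (- int (nat \<bar>i\<bar>)) \<and> u (int (nat \<bar>i\<bar>)) = v (int (nat \<bar>i\<bar>))"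
      unfolding m_def using not_less_Least by blast
    then show ?thesis
      by (cases "i \<ge> 0") auto
  qed
  then show ?thesis
    by (simp add: cylinder_def)
qed simp

lemma shifts_in_cylinder_if_tendsto_shift_dist:
  assumes "(\<lambda>n. shift_dist (shift_pow (s n) x) (shift_pow (s n) x')) \<longlonglongrightarrow> 0"
  shows "\<exists>n. shift_pow (s n) x' \<in> cylinder K (shift_pow (s n) x)"
proof -
  have "eventually (\<lambda>n. shift_dist (shift_pow (s n) x) (shift_pow (s n) x') < 2 powr (- real K)) sequentially"
    using order_tendstoD(2)[OF assms] by simp
  then show ?thesis
    unfolding eventually_sequentially by (blast intro: in_cylinder_if_shift_dist_less)
qed

lemma eq_if_asymptotic_in_cylinder_separated_fibre:
  assumes X: "shift ` X = X" and equivariant: "\<forall>x\<in>X. \<phi> (shift x) = shift (\<phi> x)"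
    and sep: "\<And>y. cylinder_separated K {x\<in>X. \<phi> x = y}"
    and in_fibre: "x \<in> X" "x' \<in> X" "\<phi> x = \<phi> x'"
    and asymptotic: "(\<lambda>n. shift_dist (shift_pow (s n) x) (shift_pow (s n) x')) \<longlonglongrightarrow> 0"
  shows "x = x'"
proof -
  obtain m where "shift_pow m x' \<in> cylinder K (shift_pow m x)"
    using shifts_in_cylinder_if_tendsto_shift_dist[OF asymptotic] by blast
  moreover have "shift_pow m x \<in> {u\<in>X. \<phi> u = \<phi> (shift_pow m x)}"
    and "shift_pow m x' \<in> {u\<in>X. \<phi> u = \<phi> (shift_pow m x)}"
    using shift_pow_equivariant[OF X equivariant] in_fibre by auto
  ultimately have "shift_pow m x' = shift_pow m x"
    using sep unfolding cylinder_separated_def by blast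
  then show ?thesis
    using inj_shift_pow by (metis injD)
qed

theorem proposition2p10:
  fixes X :: "(int \<Rightarrow> 'a::finite) set" and Y :: "(int \<Rightarrow> 'b::finite) set"
    and \<phi> :: "(int \<Rightarrow> 'a) \<Rightarrow> (int \<Rightarrow> 'b)"
  assumes "is_code X Y \<phi>"
    and "open_code X Y \<phi>"
    and "constant_to_one X Y \<phi>"
  shows "bi_closing X \<phi>"
proof -
  obtain K where sep: "\<And>y. cylinder_separated K {x\<in>X. \<phi> x = y}"
    using uniformly_cylinder_separated_fibres[OF assms] by blast
  have X: "shift ` X = X" and equivariant: "\<forall>x\<in>X. \<phi> (shift x) = shift (\<phi> x)"
    using assms(1) unfolding is_code_def shift_space_def by auto
  note collapse = eq_if_asymptotic_in_cylinder_separated_fibre[OF X equivariant sep]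
  show ?thesis
    unfolding bi_closing_def left_asymptotic_def right_asymptotic_def
    using collapse[where s = "\<lambda>n. - int n"] collapse[where s = "\<lambda>n. int n"] by blast
qed

end
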